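(* Let $q$ be a prime power, $m\ge1$, $j\ge1$, let $G\in GF(q^m)[x]$ be a separable polynomial of degree $\tau$ with factorization $G(x)=\prod_{i=1}^{\tau}(x-\beta_i)$, the $\beta_i$ lying in some finite extension field of $GF(q^m)$, and let $L=\{\alpha_1,\dots,\alpha_n\}\subseteq GF(q^m)$ with $G(\alpha_k)\ne 0$ for all $k$. Then the cumulative-separable code $\Gamma(L,G^j)$ equals the intersection (common subcode) of the cumulative codes $\Gamma(L,(x-\beta_i)^j)$, $i=1,\dots,\tau$.
   Context: For a set $L=\{\alpha_1,\dots,\alpha_n\}$ of distinct elements of a finite field $F\supseteq GF(q)$ and a polynomial $P\in F[x]$ with $P(\alpha_k)\neq0$ for all $k$, the $q$-ary Goppa code is $\Gamma(L,P)=\{c\in GF(q)^n:\ \sum_k \frac{c_k}{x-\alpha_k}\equiv 0 \pmod{P(x)}\}$. A Goppa code $\Gamma(L,G^j)$ with $G$ separable is called cumulative-separable; a Goppa code with Goppa polynomial $(x-\beta)^j$ is called cumulative. *)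

theory Defs
  imports "HOL-Computational_Algebra.Computational_Algebra"
begin

definition is_subfield :: "'a::field set \<Rightarrow> bool" where
  "is_subfield K \<longleftrightarrow> 0 \<in> K \<and> 1 \<in> K \<and>
     (\<forall>x\<in>K. \<forall>y\<in>K. x + y \<in> K \<and> x * y \<in> K) \<and>
     (\<forall>x\<in>K. - x \<in> K) \<and> (\<forall>x\<in>K. x \<noteq> 0 \<longrightarrow> inverse x \<in> K)"

definition poly_over :: "'a::zero set \<Rightarrow> 'a poly \<Rightarrow> bool" where
  "poly_over K P \<longleftrightarrow> (\<forall>i. coeff P i \<in> K)"

definition separable_poly :: "'a::field poly \<Rightarrow> bool" where
  "separable_poly G \<longleftrightarrow> coprime G (pderiv G)"

text \<open>The q-ary Goppa code Gamma(L,P): L is the list (alpha_1,...,alpha_n) of support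
  elements in the field F, K is the subfield GF(q), and a word c in K^n is a codeword iff
  sum_k c_k / (x - alpha_k) = 0 mod P, where 1/(x - alpha_k) denotes the inverse of
  (x - alpha_k) modulo P (which exists when P(alpha_k) \<noteq> 0).\<close>
definition goppa_code :: "'a::field set \<Rightarrow> 'a list \<Rightarrow> 'a poly \<Rightarrow> 'a list set" where
  "goppa_code K L P = {c. length c = length L \<and> set c \<subseteq> K \<and>
     (\<exists>u :: nat \<Rightarrow> 'a poly.
        (\<forall>k < length L. ([:- (L ! k), 1:] * u k) mod P = 1 mod P) \<and>
        P dvd (\<Sum>k < length L. smult (c ! k) (u k)))}"

end

theory Submission
  imports Defs
begin

text \<open>Separability forces the roots \<open>\<beta>\<^sub>i\<close> of \<open>G\<close> to be distinct, so \<open>G\<^sup>j\<close> is the product of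
  the pairwise coprime factors \<open>(x - \<beta>\<^sub>i)\<^sup>j\<close>. Whether a word lies in \<open>\<Gamma>(L, P)\<close> does not depend
  on which inverses of \<open>x - \<alpha>\<^sub>k\<close> modulo \<open>P\<close> are used, and inverses modulo \<open>G\<^sup>j\<close> are also
  inverses modulo every factor \<open>(x - \<beta>\<^sub>i)\<^sup>j\<close>. With these fixed inverses, membership in each code
  is divisibility of one and the same syndrome polynomial, and \<open>G\<^sup>j\<close> divides it exactly when
  every \<open>(x - \<beta>\<^sub>i)\<^sup>j\<close> does.\<close>

lemma square_dvd_imp_dvd_pderiv:
  fixes p G :: "'a::idom poly"
  assumes "p ^ 2 dvd G"
  shows "p dvd pderiv G"
proof -
  obtain r where "G = p * (p * r)"
    using assms by (metis dvdE power2_eq_square mult.assoc)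
  then have "pderiv G = p * pderiv (p * r) + (p * r) * pderiv p"
    by (simp add: pderiv_mult)
  then show ?thesis by (simp add: mult.assoc)
qed

lemma separable_poly_no_double_root:
  fixes G :: "'a::field poly"
  assumes "separable_poly G"
  shows "\<not> [:- c, 1:] ^ 2 dvd G"
proof
  assume sq: "[:- c, 1:] ^ 2 dvd G"
  then have "poly G c = 0" "poly (pderiv G) c = 0"
    using square_dvd_imp_dvd_pderiv[OF sq] dvd_trans[OF dvd_power[of 2 "[:- c, 1:]"] sq]
    by (simp_all add: poly_eq_0_iff_dvd)
  with assms show False
    using coprime_poly_0 unfolding separable_poly_def by blast
qed

lemma separable_prod_linear_imp_inj_on:
  fixes \<beta> :: "'b \<Rightarrow> 'a::field"
  assumes "finite A" and "separable_poly (\<Prod>i\<in>A. [:- \<beta> i, 1:])"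
  shows "inj_on \<beta> A"
proof (rule inj_onI, rule ccontr)
  fix a b assume ab: "a \<in> A" "b \<in> A" "\<beta> a = \<beta> b" "a \<noteq> b"
  have "(\<Prod>i\<in>{a, b}. [:- \<beta> i, 1:]) dvd (\<Prod>i\<in>A. [:- \<beta> i, 1:])"
    using ab assms(1) by (intro prod_dvd_prod_subset) auto
  then have "[:- \<beta> a, 1:] ^ 2 dvd (\<Prod>i\<in>A. [:- \<beta> i, 1:])"
    using ab by (simp add: power2_eq_square)
  then show False
    using separable_poly_no_double_root[OF assms(2)] by blast
qed

lemma linear_power_dvd_mult_cancel:
  fixes q p :: "'a::idom poly"
  assumes "poly q b \<noteq> 0"
  shows "[:- b, 1:] ^ n dvd q * p \<longleftrightarrow> [:- b, 1:] ^ n dvd p"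
proof (cases "p = 0")
  case False
  moreover have "q \<noteq> 0" using assms by auto
  ultimately have "order b (q * p) = order b p"
    using assms by (simp add: order_mult order_0I)
  with False \<open>q \<noteq> 0\<close> show ?thesis by (simp add: order_divides)
qed simp

lemma prod_linear_powers_dvd_iff:
  fixes \<beta> :: "'b \<Rightarrow> 'a::idom"
  assumes "finite A" "inj_on \<beta> A"
  shows "(\<Prod>i\<in>A. [:- \<beta> i, 1:] ^ n) dvd p \<longleftrightarrow> (\<forall>i\<in>A. [:- \<beta> i, 1:] ^ n dvd p)"
  using assms
proof (induction A arbitrary: p rule: finite_induct)
  case (insert a A)
  show ?case
  proof
    assume "(\<Prod>i\<in>insert a A. [:- \<beta> i, 1:] ^ n) dvd p"
    then show "\<forall>i\<in>insert a A. [:- \<beta> i, 1:] ^ n dvd p"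
      using insert.hyps by (meson dvd_prodI dvd_trans finite.insertI)
  next
    assume all: "\<forall>i\<in>insert a A. [:- \<beta> i, 1:] ^ n dvd p"
    then have "(\<Prod>i\<in>A. [:- \<beta> i, 1:] ^ n) dvd p"
      using insert by simp
    then obtain t where t: "p = (\<Prod>i\<in>A. [:- \<beta> i, 1:] ^ n) * t" ..
    have "poly (\<Prod>i\<in>A. [:- \<beta> i, 1:] ^ n) (\<beta> a) \<noteq> 0"
      using insert by (auto simp: poly_prod)
    then have "[:- \<beta> a, 1:] ^ n dvd t"
      using all t linear_power_dvd_mult_cancel by auto
    then show "(\<Prod>i\<in>insert a A. [:- \<beta> i, 1:] ^ n) dvd p"
      using insert.hyps t by (simp add: mult_dvd_mono mult.commute)
  qed
qed simp

lemma inverses_mod_unique: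
  fixes P x u v :: "'a::comm_ring_1"
  assumes "P dvd x * u - 1" "P dvd x * v - 1"
  shows "P dvd u - v"
proof -
  have "u - v = v * (x * u - 1) - u * (x * v - 1)" by (simp add: algebra_simps)
  with assms show ?thesis by (metis dvd_diff dvd_mult)
qed

lemma linear_poly_invertible_mod:
  fixes P :: "'a::field poly"
  assumes "poly P a \<noteq> 0"
  shows "\<exists>u. P dvd [:- a, 1:] * u - 1"
proof -
  \<comment> \<open>\<open>P = (x - a) q + P(a)\<close>, so \<open>-q / P(a)\<close> inverts \<open>x - a\<close> modulo \<open>P\<close>\<close>
  define c where "c = poly P a"
  have "[:- a, 1:] * synthetic_div P a = P - [:c:]"
    using synthetic_div_correct'[of a P] unfolding c_def by (simp add: algebra_simps)
  then have "[:- a, 1:] * smult (- inverse c) (synthetic_div P a) - 1 = smult (- inverse c) P"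
    using assms by (simp add: c_def smult_diff_right one_pCons)
  then show ?thesis by (metis dvd_smult dvd_refl)
qed

lemma goppa_code_iff_inverses:
  fixes P :: "'a::field poly"
  assumes u: "\<And>k. k < length L \<Longrightarrow> P dvd [:- (L ! k), 1:] * u k - 1"
  shows "c \<in> goppa_code K L P \<longleftrightarrow>
    length c = length L \<and> set c \<subseteq> K \<and> P dvd (\<Sum>k < length L. smult (c ! k) (u k))"
proof -
  have syndrome_indep: "P dvd (\<Sum>k < length L. smult (c ! k) (u k)) \<longleftrightarrow>
        P dvd (\<Sum>k < length L. smult (c ! k) (v k))"
    if v: "\<forall>k < length L. P dvd [:- (L ! k), 1:] * v k - 1" for v
  proof -
    have "P dvd u k - v k" if "k < length L" for k
      using u[OF that] v[rule_format, OF that] by (rule inverses_mod_unique)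
    then have "P dvd (\<Sum>k < length L. smult (c ! k) (u k - v k))"
      by (intro dvd_sum) (simp add: dvd_smult)
    then have "P dvd (\<Sum>k < length L. smult (c ! k) (u k)) - (\<Sum>k < length L. smult (c ! k) (v k))"
      by (simp add: sum_subtractf smult_diff_right)
    from dvd_add_right_iff[OF this] show ?thesis
      by (metis diff_add_cancel)
  qed
  show ?thesis
  proof
    assume "c \<in> goppa_code K L P"
    then obtain v where "length c = length L" "set c \<subseteq> K"
      and "\<forall>k < length L. P dvd [:- (L ! k), 1:] * v k - 1"
      and "P dvd (\<Sum>k < length L. smult (c ! k) (v k))"
      unfolding goppa_code_def mod_eq_dvd_iff by blast
    with syndrome_indep show "length c = length L \<and> set c \<subseteq> K \<and>
        P dvd (\<Sum>k < length L. smult (c ! k) (u k))"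
      by blast
  next
    assume "length c = length L \<and> set c \<subseteq> K \<and> P dvd (\<Sum>k < length L. smult (c ! k) (u k))"
    with u show "c \<in> goppa_code K L P"
      unfolding goppa_code_def mod_eq_dvd_iff by blast
  qed
qed

lemma goppa_code_prod_linear_powers:
  fixes \<beta> :: "'b \<Rightarrow> 'a::field"
  assumes "finite A" "A \<noteq> {}" "inj_on \<beta> A" "\<forall>i\<in>A. \<beta> i \<notin> set L"
  shows "goppa_code K L (\<Prod>i\<in>A. [:- \<beta> i, 1:] ^ n) = (\<Inter>i\<in>A. goppa_code K L ([:- \<beta> i, 1:] ^ n))"
proof -
  define P where "P = (\<Prod>i\<in>A. [:- \<beta> i, 1:] ^ n)"
  have "\<exists>w. P dvd [:- (L ! k), 1:] * w - 1" if "k < length L" for k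
  proof (rule linear_poly_invertible_mod)
    have "L ! k \<in> set L"
      using that by simp
    then show "poly P (L ! k) \<noteq> 0"
      using assms(1,4) unfolding P_def by (auto simp: poly_prod)
  qed
  then obtain u where u: "\<And>k. k < length L \<Longrightarrow> P dvd [:- (L ! k), 1:] * u k - 1"
    by metis
  have u_factor: "[:- \<beta> i, 1:] ^ n dvd [:- (L ! k), 1:] * u k - 1"
    if "i \<in> A" "k < length L" for i k
  proof (rule dvd_trans)
    show "[:- \<beta> i, 1:] ^ n dvd P"
      unfolding P_def using assms(1) that(1) by (rule dvd_prodI)
  qed (rule u[OF that(2)])
  have dvd_P_iff: "P dvd s \<longleftrightarrow> (\<forall>i\<in>A. [:- \<beta> i, 1:] ^ n dvd s)" for s
    unfolding P_def using assms(1,3) by (rule prod_linear_powers_dvd_iff)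
  show ?thesis
    unfolding P_def[symmetric]
  proof (rule set_eqI)
    fix c
    have "c \<in> goppa_code K L P \<longleftrightarrow> length c = length L \<and> set c \<subseteq> K \<and>
        (\<forall>i\<in>A. [:- \<beta> i, 1:] ^ n dvd (\<Sum>k < length L. smult (c ! k) (u k)))"
      using goppa_code_iff_inverses[OF u] dvd_P_iff by simp
    also have "\<dots> \<longleftrightarrow> (\<forall>i\<in>A. c \<in> goppa_code K L ([:- \<beta> i, 1:] ^ n))"
      using assms(2) by (simp add: goppa_code_iff_inverses[OF u_factor] ball_conj_distrib ex_in_conv)
    finally show "c \<in> goppa_code K L P \<longleftrightarrow> c \<in> (\<Inter>i\<in>A. goppa_code K L ([:- \<beta> i, 1:] ^ n))"
      by simp
  qed
qed

theorem corollary2: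
  fixes K E :: "'a::{field,finite} set"
    and q m j \<tau> :: nat
    and G :: "'a poly"
    and \<beta> :: "nat \<Rightarrow> 'a"
    and L :: "'a list"
  assumes q_pp: "\<exists>p k. prime p \<and> 0 < k \<and> q = p ^ k"
    and m: "1 \<le> m" and j: "1 \<le> j"
    and K: "is_subfield K" "card K = q"
    and E: "is_subfield E" "card E = q ^ m" "K \<subseteq> E"
    and G_over: "poly_over E G"
    and G_sep: "separable_poly G"
    and G_deg: "degree G = \<tau>" and tau: "0 < \<tau>"
    and G_fact: "G = (\<Prod>i\<in>{1..\<tau>}. [:- \<beta> i, 1:])"
    and L_dist: "distinct L" and L_E: "set L \<subseteq> E"
    and L_nonroot: "\<forall>a\<in>set L. poly G a \<noteq> 0"
  shows "goppa_code K L (G ^ j) = (\<Inter>i\<in>{1..\<tau>}. goppa_code K L ([:- \<beta> i, 1:] ^ j))"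
proof -
  have "G ^ j = (\<Prod>i\<in>{1..\<tau>}. [:- \<beta> i, 1:] ^ j)"
    using G_fact by (simp add: prod_power_distrib)
  also have "goppa_code K L \<dots> = (\<Inter>i\<in>{1..\<tau>}. goppa_code K L ([:- \<beta> i, 1:] ^ j))"
  proof (rule goppa_code_prod_linear_powers)
    show "inj_on \<beta> {1..\<tau>}"
      using G_sep G_fact by (simp add: separable_prod_linear_imp_inj_on)
    show "\<forall>i\<in>{1..\<tau>}. \<beta> i \<notin> set L"
      using L_nonroot unfolding G_fact by (auto simp: poly_prod)
  qed (use tau in auto)
  finally show ?thesis .
qed

end
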